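(* Assume the Setting and consider Algorithm 2 with $0<\mu_0<4\sigma(1-\eta)$. Then $x_n\in B_{2\rho}(x_0)$ for all $n\ge0$, and for every solution $\hat x$ of $F(x)=y$ with $\hat x\in B_{2\rho}(x_0)\cap\mathrm{dom}(\mathcal R)$, setting $\Delta_n:=D_{\mathcal R}^{\xi_n}(\hat x,x_n)$ and $c_1:=1-\eta-\mu_0/(4\sigma)>0$, one has $\Delta_{n+1}\le\Delta_n-c_1\alpha_n\|F(x_n)-y\|^2$ for all $n\ge0$. Consequently $(\Delta_n)$ is monotonically nonincreasing and $\sum_{n=0}^\infty\alpha_n\|F(x_n)-y\|^2<\infty$.
   Context: Setting. Let $X,Y$ be real Hilbert spaces. Let $\mathcal R:X\to(-\infty,\infty]$ be proper, lower semicontinuous and strongly convex with constant $\sigma>0$, i.e. $\mathcal R(t\bar x+(1-t)x)+\sigma t(1-t)\|\bar x-x\|^2\le t\mathcal R(\bar x)+(1-t)\mathcal R(x)$ for all $\bar x,x\in\mathrm{dom}(\mathcal R)$ and $t\in[0,1]$. For $\xi\in\partial\mathcal R(x)$ (subdifferential) the Bregman distance is $D_{\mathcal R}^{\xi}(z,x)=\mathcal R(z)-\mathcal R(x)-\langle\xi,z-x\rangle$. The convex conjugate $\mathcal R^*$ is differentiable with $\|\nabla\mathcal R^*(\bar\xi)-\nabla\mathcal R^*(\xi)\|\le\|\bar\xi-\xi\|/(2\sigma)$, and $\nabla\mathcal R^*(\xi)=\arg\min_{x\in X}\{\mathcal R(x)-\langle\xi,x\rangle\}$ (unique minimizer), with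 $\xi\in\partial\mathcal R(\nabla\mathcal R^*(\xi))$. Let $F:\mathrm{dom}(F)\subset X\to Y$ and $y\in Y$. Assume: (b) there are $\rho>0$, $x_0\in X$, $\xi_0\in\partial\mathcal R(x_0)$ with $B_{2\rho}(x_0):=\{x:\|x-x_0\|\le 2\rho\}\subset\mathrm{dom}(F)$, and $F(x)=y$ has a solution $\bar x$ with $D_{\mathcal R}^{\xi_0}(\bar x,x_0)\le\sigma\rho^2$; (c) $F$ is weakly closed: if $x_n\in\mathrm{dom}(F)$, $x_n\rightharpoonup x$ and $F(x_n)\to v$, then $x\in\mathrm{dom}(F)$ and $F(x)=v$; (d) there are bounded linear operators $L(x):X\to Y$, $x\in B_{2\rho}(x_0)$, with $x\mapsto L(x)$ continuous on $B_{2\rho}(x_0)$, a constant $\eta\in[0,1)$ with $\|F(x)-F(\bar x)-L(\bar x)(x-\bar x)\|\le\eta\|F(x)-F(\bar x)\|$ for all $x,\bar x\in B_{2\rho}(x_0)$, and a constant $L>0$ with $\|L(x)\|\le L$ on $B_{2\rho}(x_0)$. Algorithm 2 (exact data $y$). Parameters: $\beta\in(0,\infty]$, $\mu_0>0$, $\mu_1>0$, and a fixed choice of step-size rule: (constant) $\alpha_n=\mu_0/L^2$, or (adaptive) $\alpha_n=\min\{\mu_0\|r_n\|^2/\|g_n\|^2,\mu_1\}$ if $r_n\ne0$ and $\alpha_n=0$ if $r_n=0$ (with $\mu_0\|r_n\|^2/\|g_n\|^2:=+\infty$ if $g_n=0$). Set $\xi_{-1}=\xi_0$, $x_0=\nabla\mathcal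 R^*(\xi_0)$. For all $n\ge0$ (no stopping): $r_n:=F(x_n)-y$, $g_n:=L(x_n)^*r_n$, $\alpha_n$ by the chosen rule; $m_n:=\xi_n-\xi_{n-1}$; $\tilde\gamma_0:=0$ and for $n\ge1$, $\tilde\gamma_n:=\langle m_n,x_n-x_{n-1}\rangle-(1-\eta)\alpha_{n-1}\|r_{n-1}\|^2+\beta_{n-1}\tilde\gamma_{n-1}$; $\beta_n:=\min\{\max\{0,(\alpha_n\langle g_n,m_n\rangle-2\sigma\tilde\gamma_n)/\|m_n\|^2\},\beta\}$ if $m_n\ne0$ and $\beta_n:=0$ if $m_n=0$; $\xi_{n+1}:=\xi_n-\alpha_ng_n+\beta_nm_n$, $x_{n+1}:=\nabla\mathcal R^*(\xi_{n+1})$. *)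

theory Defs
  imports "HOL-Analysis.Analysis" "HOL-Library.Extended_Real"
begin

definition effdom :: "('a \<Rightarrow> ereal) \<Rightarrow> 'a set" where
  "effdom R = {x. R x < \<infinity>}"

definition proper_fun :: "('a \<Rightarrow> ereal) \<Rightarrow> bool" where
  "proper_fun R \<longleftrightarrow> (\<forall>x. R x \<noteq> -\<infinity>) \<and> (\<exists>x. R x \<noteq> \<infinity>)"

definition lsc_fun :: "('a::topological_space \<Rightarrow> ereal) \<Rightarrow> bool" where
  "lsc_fun R \<longleftrightarrow> (\<forall>c. closed {x. R x \<le> c})"

definition strongly_convex :: "('a::real_normed_vector \<Rightarrow> ereal) \<Rightarrow> real \<Rightarrow> bool" where
  "strongly_convex R \<sigma> \<longleftrightarrow>
     (\<forall>xb\<in>effdom R. \<forall>x\<in>effdom R. \<forall>t\<in>{0..1::real}.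
        R (t *\<^sub>R xb + (1 - t) *\<^sub>R x) + ereal (\<sigma> * t * (1 - t) * (norm (xb - x))\<^sup>2)
          \<le> ereal t * R xb + ereal (1 - t) * R x)"

definition subdiff :: "('a::real_inner \<Rightarrow> ereal) \<Rightarrow> 'a \<Rightarrow> 'a set" where
  "subdiff R x = {\<xi>. R x \<noteq> \<infinity> \<and> R x \<noteq> -\<infinity> \<and>
                       (\<forall>z. R x + ereal (\<xi> \<bullet> (z - x)) \<le> R z)}"

definition bregman :: "('a::real_inner \<Rightarrow> ereal) \<Rightarrow> 'a \<Rightarrow> 'a \<Rightarrow> 'a \<Rightarrow> ereal" where
  "bregman R \<xi> z x = R z - R x - ereal (\<xi> \<bullet> (z - x))"

text \<open>\<open>\<nabla>R\<^sup>*(\<xi>)\<close> = the (unique) minimiser of \<open>R(x) - \<langle>\<xi>,x\<rangle>\<close>.\<close>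
definition grad_conj :: "('a::real_inner \<Rightarrow> ereal) \<Rightarrow> 'a \<Rightarrow> 'a" where
  "grad_conj R \<xi> = (THE x. \<forall>z. R x - ereal (\<xi> \<bullet> x) \<le> R z - ereal (\<xi> \<bullet> z))"

definition weak_conv :: "(nat \<Rightarrow> 'a::real_inner) \<Rightarrow> 'a \<Rightarrow> bool" where
  "weak_conv xs x \<longleftrightarrow> (\<forall>v. (\<lambda>n. v \<bullet> xs n) \<longlonglongrightarrow> v \<bullet> x)"

end

theory Submission
  imports Defs
begin

text \<open>
  Fix a solution \<open>x\<^sub>h\<close> and write \<open>d\<^sub>n = \<xi>(n+1) - \<xi>(n)\<close>. The three-point identity
  splits \<open>\<Delta>(n+1) - \<Delta>(n)\<close> into the Bregman distance of \<open>x(n)\<close> from \<open>x(n+1)\<close>, which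
  \<open>\<sigma>\<close>-strong convexity bounds by \<open>|d\<^sub>n|\<^sup>2 / (4\<sigma>)\<close>, and \<open>\<langle>d\<^sub>n, x(n) - x\<^sub>h\<rangle>\<close>. With
  \<open>d\<^sub>n = -\<alpha>\<^sub>n g\<^sub>n + \<beta>\<^sub>n m\<^sub>n\<close>, the tangential cone condition gives
  \<open>\<langle>g\<^sub>n, x(n) - x\<^sub>h\<rangle> \<ge> (1 - \<eta>) |r\<^sub>n|\<^sup>2\<close>, the step-size rule gives
  \<open>\<alpha>\<^sub>n |g\<^sub>n|\<^sup>2 \<le> \<mu>\<^sub>0 |r\<^sub>n|\<^sup>2\<close>, and \<open>\<gamma>\<^sub>n\<close> is an upper bound for \<open>\<langle>m\<^sub>n, x(n) - x\<^sub>h\<rangle>\<close>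
  that its own recursion propagates; \<open>\<beta>\<^sub>n\<close> is chosen exactly so that all momentum terms
  together are nonpositive. For a solution \<open>x\<^sub>b\<close> with \<open>D(x\<^sub>b, x\<^sub>0) \<le> \<sigma>\<rho>\<^sup>2\<close> the descent
  keeps every iterate within \<open>\<rho>\<close> of \<open>x\<^sub>b\<close>, hence inside \<open>B\<^sub>2\<^sub>\<rho>(x\<^sub>0)\<close> where all these
  estimates are valid, and telescoping gives summability.

  That \<open>x(n) = \<nabla>R\<^sup>*(\<xi>(n))\<close> is well defined rests on completeness: a strongly midpoint
  convex function with closed sublevel sets has Cauchy minimising sequences.
\<close>

section \<open>Strongly convex functionals and Bregman distances\<close>

text \<open>Meaningful only on \<open>effdom R\<close>: \<open>real_of_ereal\<close> sends \<open>\<infinity>\<close> to \<open>0\<close>.\<close>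
definition bregman_real :: "('a::real_inner \<Rightarrow> ereal) \<Rightarrow> 'a \<Rightarrow> 'a \<Rightarrow> 'a \<Rightarrow> real" where
  "bregman_real R \<xi> z x = real_of_ereal (R z) - real_of_ereal (R x) - \<xi> \<bullet> (z - x)"

lemma notin_effdom_iff: "x \<notin> effdom R \<longleftrightarrow> R x = \<infinity>"
  by (simp add: effdom_def less_le)

lemma proper_fun_effdom_finite:
  assumes "proper_fun R" "x \<in> effdom R"
  shows "R x = ereal (real_of_ereal (R x))"
  using assms unfolding proper_fun_def effdom_def by (cases "R x") auto

lemma bregman_eq_bregman_real:
  assumes "proper_fun R" "z \<in> effdom R" "x \<in> effdom R"
  shows "bregman R \<xi> z x = ereal (bregman_real R \<xi> z x)"
  unfolding bregman_def bregman_real_def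
  by (subst proper_fun_effdom_finite[OF assms(1,2)], subst proper_fun_effdom_finite[OF assms(1,3)]) simp

lemma subdiff_effdom: "\<xi> \<in> subdiff R x \<Longrightarrow> x \<in> effdom R"
  by (simp add: subdiff_def effdom_def less_le)

lemma bregman_real_subdiff_nonneg:
  assumes "proper_fun R" "\<xi> \<in> subdiff R x" "z \<in> effdom R"
  shows "0 \<le> bregman_real R \<xi> z x"
proof -
  have "R x + ereal (\<xi> \<bullet> (z - x)) \<le> R z" using assms(2) unfolding subdiff_def by auto
  then show ?thesis unfolding bregman_real_def
    by (subst (asm) proper_fun_effdom_finite[OF assms(1) subdiff_effdom[OF assms(2)]],
        subst (asm) proper_fun_effdom_finite[OF assms(1,3)]) simp
qed

lemma subdiff_iff_minimizer:
  assumes "proper_fun R"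
  shows "\<xi> \<in> subdiff R x \<longleftrightarrow> (\<forall>z. R x - ereal (\<xi> \<bullet> x) \<le> R z - ereal (\<xi> \<bullet> z))"
proof -
  have "R x \<noteq> - \<infinity>" "R z \<noteq> - \<infinity>" for z using assms unfolding proper_fun_def by auto
  then have "R x + ereal (\<xi> \<bullet> (z - x)) \<le> R z \<longleftrightarrow> R x - ereal (\<xi> \<bullet> x) \<le> R z - ereal (\<xi> \<bullet> z)"
    if "R x \<noteq> \<infinity>" for z
    using that by (cases "R x"; cases "R z") (auto simp: inner_diff_right algebra_simps)
  moreover have "R x \<noteq> \<infinity>" if "\<forall>z. R x - ereal (\<xi> \<bullet> x) \<le> R z - ereal (\<xi> \<bullet> z)"
  proof -
    obtain x1 where "R x1 \<noteq> \<infinity>" "R x1 \<noteq> - \<infinity>" using assms unfolding proper_fun_def by auto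
    moreover have "R x - ereal (\<xi> \<bullet> x) \<le> R x1 - ereal (\<xi> \<bullet> x1)" using that by blast
    ultimately show ?thesis by (cases "R x1") auto
  qed
  ultimately show ?thesis unfolding subdiff_def using \<open>R x \<noteq> - \<infinity>\<close> by blast
qed

lemma strongly_convex_combination:
  assumes "proper_fun R" "strongly_convex R \<sigma>" "a \<in> effdom R" "c \<in> effdom R" "0 \<le> t" "t \<le> 1"
  shows "t *\<^sub>R a + (1 - t) *\<^sub>R c \<in> effdom R"
    and "real_of_ereal (R (t *\<^sub>R a + (1 - t) *\<^sub>R c)) + \<sigma> * t * (1 - t) * (norm (a - c))\<^sup>2
           \<le> t * real_of_ereal (R a) + (1 - t) * real_of_ereal (R c)"
proof -
  let ?w = "t *\<^sub>R a + (1 - t) *\<^sub>R c"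
  have "t \<in> {0..1}" using assms(5,6) by simp
  then have "R ?w + ereal (\<sigma> * t * (1 - t) * (norm (a - c))\<^sup>2) \<le> ereal t * R a + ereal (1 - t) * R c"
    using assms(2-4) unfolding strongly_convex_def by blast
  also have "\<dots> = ereal (t * real_of_ereal (R a) + (1 - t) * real_of_ereal (R c))"
    by (subst proper_fun_effdom_finite[OF assms(1,3)], subst proper_fun_effdom_finite[OF assms(1,4)]) simp
  finally have "R ?w + ereal (\<sigma> * t * (1 - t) * (norm (a - c))\<^sup>2)
    \<le> ereal (t * real_of_ereal (R a) + (1 - t) * real_of_ereal (R c))" .
  moreover from this show w: "?w \<in> effdom R"
    unfolding notin_effdom_iff[symmetric] by (cases "R ?w") (auto simp: effdom_def)
  ultimately show "real_of_ereal (R ?w) + \<sigma> * t * (1 - t) * (norm (a - c))\<^sup>2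
           \<le> t * real_of_ereal (R a) + (1 - t) * real_of_ereal (R c)"
    by (subst (asm) proper_fun_effdom_finite[OF assms(1) w]) simp
qed

lemma strongly_convex_midpoint:
  assumes "proper_fun R" "strongly_convex R \<sigma>" "a \<in> effdom R" "c \<in> effdom R"
  shows "midpoint a c \<in> effdom R"
    and "real_of_ereal (R (midpoint a c)) + \<sigma> / 4 * (norm (a - c))\<^sup>2
           \<le> real_of_ereal (R a) / 2 + real_of_ereal (R c) / 2"
proof -
  have mid: "midpoint a c = (1/2) *\<^sub>R a + (1 - 1/2) *\<^sub>R c"
    by (simp add: midpoint_def scaleR_right_distrib)
  show "midpoint a c \<in> effdom R"
    unfolding mid by (rule strongly_convex_combination(1)[OF assms]) simp_all
  have "\<sigma> / 4 = \<sigma> * (1/2) * (1 - 1/2)" by simp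
  then show "real_of_ereal (R (midpoint a c)) + \<sigma> / 4 * (norm (a - c))\<^sup>2
           \<le> real_of_ereal (R a) / 2 + real_of_ereal (R c) / 2"
    using strongly_convex_combination(2)[OF assms, of "1/2"] unfolding mid by simp
qed

lemma strongly_convex_minus_inner_midpoint:
  assumes "proper_fun R" "strongly_convex R \<sigma>" "a \<in> effdom R" "c \<in> effdom R"
  shows "real_of_ereal (R (midpoint a c)) - \<xi> \<bullet> midpoint a c + \<sigma> / 4 * (norm (a - c))\<^sup>2
     \<le> ((real_of_ereal (R a) - \<xi> \<bullet> a) + (real_of_ereal (R c) - \<xi> \<bullet> c)) / 2"
proof -
  have "real_of_ereal (R (midpoint a c)) - \<xi> \<bullet> midpoint a c + \<sigma> / 4 * (norm (a - c))\<^sup>2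
      = real_of_ereal (R (midpoint a c)) + \<sigma> / 4 * (norm (a - c))\<^sup>2 - (\<xi> \<bullet> a / 2 + \<xi> \<bullet> c / 2)"
    by (simp add: midpoint_def inner_add_right add_divide_distrib)
  also have "\<dots> \<le> real_of_ereal (R a) / 2 + real_of_ereal (R c) / 2 - (\<xi> \<bullet> a / 2 + \<xi> \<bullet> c / 2)"
    using strongly_convex_midpoint(2)[OF assms] by (rule diff_right_mono)
  also have "\<dots> = (real_of_ereal (R a) - \<xi> \<bullet> a) / 2 + (real_of_ereal (R c) - \<xi> \<bullet> c) / 2"
    by (simp add: diff_divide_distrib)
  finally show ?thesis by (simp only: add_divide_distrib)
qed

lemma strongly_convex_bregman_real_lower:
  assumes "proper_fun R" "strongly_convex R \<sigma>" "\<xi> \<in> subdiff R x" "z \<in> effdom R"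
  shows "\<sigma> * (norm (z - x))\<^sup>2 \<le> bregman_real R \<xi> z x"
proof -
  have x: "x \<in> effdom R" using subdiff_effdom[OF assms(3)] .
  have "\<sigma> * (1 - t) * (norm (z - x))\<^sup>2 \<le> bregman_real R \<xi> z x" if t: "0 < t" "t < 1" for t
  proof -
    let ?w = "t *\<^sub>R z + (1 - t) *\<^sub>R x"
    have "0 \<le> bregman_real R \<xi> ?w x"
      using bregman_real_subdiff_nonneg[OF assms(1,3)] strongly_convex_combination(1)[OF assms(1,2,4) x] t
      by simp
    moreover have "?w - x = t *\<^sub>R (z - x)" by (simp add: algebra_simps)
    ultimately have "t * (\<sigma> * (1 - t) * (norm (z - x))\<^sup>2) \<le> t * bregman_real R \<xi> z x"
      using strongly_convex_combination(2)[OF assms(1,2,4) x, where t=t] t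
      unfolding bregman_real_def by (simp add: algebra_simps)
    then show ?thesis using t by simp
  qed
  then have "\<forall>\<^sub>F t in at_right 0. \<sigma> * (1 - t) * (norm (z - x))\<^sup>2 \<le> bregman_real R \<xi> z x"
    unfolding eventually_at_right_field by (intro exI[of _ 1]) auto
  moreover have "((\<lambda>t. \<sigma> * (1 - t) * (norm (z - x))\<^sup>2) \<longlongrightarrow> \<sigma> * (1 - 0) * (norm (z - x))\<^sup>2) (at_right 0)"
    by (intro tendsto_intros)
  ultimately show ?thesis by (intro tendsto_upperbound) auto
qed

lemma inner_minus_scaled_sq_le:
  fixes d v :: "'a::real_inner"
  assumes "\<sigma> > 0"
  shows "d \<bullet> v - \<sigma> * (norm v)\<^sup>2 \<le> (norm d)\<^sup>2 / (4 * \<sigma>)"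
proof -
  have "0 \<le> (norm d - 2 * \<sigma> * norm v)\<^sup>2" by simp
  then have "4 * \<sigma> * (norm d * norm v - \<sigma> * (norm v)\<^sup>2) \<le> (norm d)\<^sup>2"
    by (simp add: power2_eq_square algebra_simps)
  moreover have "4 * \<sigma> * (d \<bullet> v) \<le> 4 * \<sigma> * (norm d * norm v)"
    using norm_cauchy_schwarz[of d v] assms by simp
  ultimately have "4 * \<sigma> * (d \<bullet> v - \<sigma> * (norm v)\<^sup>2) \<le> (norm d)\<^sup>2"
    by (simp add: algebra_simps)
  then show ?thesis using assms by (simp add: pos_le_divide_eq mult.commute)
qed

section \<open>Minimisers in Hilbert spaces\<close>

lemma midpoint_convex_minimizing_seq_Cauchy:
  fixes f :: "'a::real_normed_vector \<Rightarrow> real"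
  assumes s: "s > 0"
    and lb: "\<And>x. x \<in> D \<Longrightarrow> m \<le> f x"
    and mid_mem: "\<And>a c. a \<in> D \<Longrightarrow> c \<in> D \<Longrightarrow> midpoint a c \<in> D"
    and mid_le: "\<And>a c. a \<in> D \<Longrightarrow> c \<in> D \<Longrightarrow>
       f (midpoint a c) + s * (norm (a - c))\<^sup>2 \<le> (f a + f c) / 2"
    and z: "\<And>k. z k \<in> D" "\<And>k. f (z k) \<le> m + inverse (real (Suc k))"
  shows "Cauchy z"
proof (rule metric_CauchyI)
  fix e :: real assume e: "e > 0"
  then obtain M where M: "inverse (real (Suc M)) < s * e\<^sup>2"
    using reals_Archimedean[of "s * e\<^sup>2"] s by auto
  have "dist (z j) (z k) < e" if jk: "j \<ge> M" "k \<ge> M" for j k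
  proof -
    have "2 * f (midpoint (z j) (z k)) + 2 * (s * (norm (z j - z k))\<^sup>2) \<le> f (z j) + f (z k)"
      using mid_le[OF z(1) z(1), of j k] by (simp add: field_simps)
    moreover have "m \<le> f (midpoint (z j) (z k))" using lb mid_mem[OF z(1) z(1)] by blast
    ultimately have "2 * (s * (norm (z j - z k))\<^sup>2) \<le> f (z j) + f (z k) - 2 * m" by linarith
    also have "\<dots> \<le> inverse (real (Suc j)) + inverse (real (Suc k))"
      using z(2)[of j] z(2)[of k] by simp
    also have "\<dots> \<le> 2 * inverse (real (Suc M))"
    proof -
      have "inverse (real (Suc j)) \<le> inverse (real (Suc M))" "inverse (real (Suc k)) \<le> inverse (real (Suc M))"
        using jk by (auto intro: le_imp_inverse_le)
      then show ?thesis by linarith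
    qed
    also have "\<dots> < 2 * (s * e\<^sup>2)" using M by simp
    finally have "s * (norm (z j - z k))\<^sup>2 < s * e\<^sup>2" by simp
    then have "(norm (z j - z k))\<^sup>2 < e\<^sup>2" using s by simp
    then show ?thesis using e by (simp add: dist_norm power_less_imp_less_base)
  qed
  then show "\<exists>M. \<forall>j\<ge>M. \<forall>k\<ge>M. dist (z j) (z k) < e" by blast
qed

lemma midpoint_convex_attains_min:
  fixes f :: "'a::{real_normed_vector, complete_space} \<Rightarrow> real"
  assumes ne: "D \<noteq> {}" and s: "s > 0" and bdd: "\<And>x. x \<in> D \<Longrightarrow> b \<le> f x"
    and mid_mem: "\<And>a c. a \<in> D \<Longrightarrow> c \<in> D \<Longrightarrow> midpoint a c \<in> D"
    and mid_le: "\<And>a c. a \<in> D \<Longrightarrow> c \<in> D \<Longrightarrow>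
       f (midpoint a c) + s * (norm (a - c))\<^sup>2 \<le> (f a + f c) / 2"
    and closed: "\<And>z u c. (\<forall>k. z k \<in> D \<and> f (z k) \<le> c) \<Longrightarrow> z \<longlonglongrightarrow> u \<Longrightarrow> u \<in> D \<and> f u \<le> c"
  shows "\<exists>u\<in>D. \<forall>x\<in>D. f u \<le> f x"
proof -
  define m where "m = Inf (f ` D)"
  have m_le: "\<And>x. x \<in> D \<Longrightarrow> m \<le> f x"
    unfolding m_def using bdd_belowI2[of D b f] bdd by (auto intro: cInf_lower)
  have "\<exists>x\<in>D. f x \<le> m + inverse (real (Suc k))" for k
    using cInf_lessD[of "f ` D" "m + inverse (real (Suc k))"] ne unfolding m_def by force
  then obtain z where z: "\<And>k. z k \<in> D" "\<And>k. f (z k) \<le> m + inverse (real (Suc k))" by metis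
  obtain u where u: "z \<longlonglongrightarrow> u"
    using Cauchy_convergent[OF midpoint_convex_minimizing_seq_Cauchy[OF s m_le mid_mem mid_le z]]
    unfolding convergent_def by blast
  have u_le: "u \<in> D \<and> f u \<le> m + inverse (real (Suc N))" for N
  proof (rule closed[OF _ LIMSEQ_ignore_initial_segment[OF u, of N]], intro allI conjI)
    fix k
    show "z (k + N) \<in> D" by (rule z(1))
    have "inverse (real (Suc (k + N))) \<le> inverse (real (Suc N))" by (auto intro: le_imp_inverse_le)
    then show "f (z (k + N)) \<le> m + inverse (real (Suc N))" using z(2)[of "k + N"] by linarith
  qed
  have "(\<lambda>N. m + inverse (real (Suc N))) \<longlonglongrightarrow> m"
    using tendsto_add[OF tendsto_const LIMSEQ_inverse_real_of_nat, of m] by simp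
  then have "f u \<le> m" using u_le by (intro LIMSEQ_le_const) auto
  then show ?thesis using u_le m_le by force
qed

lemma nonneg_quadratic_linear_coeff_zero:
  fixes a b :: real
  assumes "\<And>t. 0 \<le> t * a + t\<^sup>2 * b" "b \<ge> 0"
  shows "a = 0"
proof (rule ccontr)
  assume "a \<noteq> 0"
  define t where "t = - a / (b + 1)"
  have "a + t * b = a / (b + 1)" using assms(2) by (simp add: t_def field_simps)
  moreover have "t * a + t\<^sup>2 * b = t * (a + t * b)" by (simp add: power2_eq_square algebra_simps)
  ultimately have "t * a + t\<^sup>2 * b = - (a / (b + 1))\<^sup>2" by (simp add: t_def power2_eq_square)
  also have "\<dots> < 0" using \<open>a \<noteq> 0\<close> assms(2) by simp
  finally show False using assms(1)[of t] by simp
qed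

text \<open>HOL-Analysis characterises \<open>adjoint\<close> only on euclidean spaces; on a Hilbert space
  it rests on the Riesz representation.\<close>
lemma riesz_representation:
  fixes \<phi> :: "'a::{real_inner, complete_space} \<Rightarrow> real"
  assumes bl: "bounded_linear \<phi>"
  shows "\<exists>w. \<forall>x. \<phi> x = w \<bullet> x"
proof -
  obtain K where K: "\<And>x. norm (\<phi> x) \<le> norm x * K" using bounded_linear.bounded[OF bl] by blast
  interpret linear \<phi> using bl by (rule bounded_linear.linear)
  define f where "f v = v \<bullet> v - 2 * \<phi> v" for v
  have "\<exists>w\<in>UNIV. \<forall>x\<in>UNIV. f w \<le> f x"
  proof (rule midpoint_convex_attains_min[where s = "1/4" and b = "- K\<^sup>2"])
    fix x :: 'a
    have "\<phi> x \<le> norm x * K" using K[of x] by simp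
    moreover have "0 \<le> (norm x - K)\<^sup>2" by simp
    ultimately show "- K\<^sup>2 \<le> f x" unfolding f_def
      by (simp add: power2_eq_square power2_norm_eq_inner[symmetric] algebra_simps)
  next
    fix a c :: 'a
    have "(midpoint a c) \<bullet> (midpoint a c) + 1/4 * (norm (a - c))\<^sup>2 = (a \<bullet> a + c \<bullet> c) / 2"
      by (simp add: midpoint_def power2_norm_eq_inner inner_add inner_diff inner_commute algebra_simps)
    moreover have "\<phi> (midpoint a c) = (\<phi> a + \<phi> c) / 2" by (simp add: midpoint_def add scale)
    ultimately show "f (midpoint a c) + 1/4 * (norm (a - c))\<^sup>2 \<le> (f a + f c) / 2"
      unfolding f_def by (simp add: field_simps)
  next
    fix z :: "nat \<Rightarrow> 'a" and u c
    assume "\<forall>k. z k \<in> UNIV \<and> f (z k) \<le> c" "z \<longlonglongrightarrow> u"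
    moreover from \<open>z \<longlonglongrightarrow> u\<close> have "(\<lambda>k. f (z k)) \<longlonglongrightarrow> f u"
      unfolding f_def by (intro tendsto_intros bounded_linear.tendsto[OF bl])
    ultimately show "u \<in> UNIV \<and> f u \<le> c" by (auto intro: LIMSEQ_le_const2)
  qed simp_all
  then obtain w where w: "\<And>x. f w \<le> f x" by blast
  have "\<phi> h = w \<bullet> h" for h
  proof -
    have "0 \<le> t * (2 * (w \<bullet> h) - 2 * \<phi> h) + t\<^sup>2 * (h \<bullet> h)" for t
      using w[of "w + t *\<^sub>R h"] unfolding f_def
      by (simp add: add scale inner_add inner_commute algebra_simps power2_eq_square)
    then have "2 * (w \<bullet> h) - 2 * \<phi> h = 0" by (rule nonneg_quadratic_linear_coeff_zero) simp
    then show ?thesis by simp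
  qed
  then show ?thesis by blast
qed

lemma adjoint_blinfun_inner:
  fixes T :: "'a::{real_inner, complete_space} \<Rightarrow>\<^sub>L 'b::real_inner"
  shows "blinfun_apply T x \<bullet> y = x \<bullet> adjoint (blinfun_apply T) y"
proof -
  have "\<exists>w. \<forall>x. blinfun_apply T x \<bullet> y = x \<bullet> w" for y
  proof -
    have "bounded_linear (\<lambda>x. blinfun_apply T x \<bullet> y)"
      by (intro bounded_linear_compose[OF bounded_linear_inner_left] blinfun.bounded_linear_right)
    then show ?thesis by (auto dest: riesz_representation simp: inner_commute)
  qed
  then have "\<exists>f'. \<forall>x y. blinfun_apply T x \<bullet> y = x \<bullet> f' y" by metis
  then have "\<forall>x y. blinfun_apply T x \<bullet> y = x \<bullet> adjoint (blinfun_apply T) y"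
    unfolding adjoint_def by (rule someI_ex)
  then show ?thesis by blast
qed

lemma norm_adjoint_blinfun_le:
  fixes T :: "'a::{real_inner, complete_space} \<Rightarrow>\<^sub>L 'b::real_inner"
  shows "norm (adjoint (blinfun_apply T) y) \<le> norm T * norm y"
proof -
  let ?g = "adjoint (blinfun_apply T) y"
  have "norm ?g * norm ?g = blinfun_apply T ?g \<bullet> y"
    by (simp add: adjoint_blinfun_inner flip: power2_norm_eq_inner power2_eq_square)
  also have "\<dots> \<le> norm (blinfun_apply T ?g) * norm y" by (rule norm_cauchy_schwarz)
  also have "\<dots> \<le> norm ?g * (norm T * norm y)"
    using mult_left_mono[OF norm_blinfun[of T ?g] norm_ge_zero[of y]] by (simp add: algebra_simps)
  finally show ?thesis
    by (cases "norm ?g = 0") (auto simp: mult_le_cancel_left_pos intro: mult_nonneg_nonneg)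
qed

lemma lsc_fun_limit_le:
  assumes "lsc_fun R" "z \<longlonglongrightarrow> u" "\<And>k. R (z k) \<le> ereal (c + \<xi> \<bullet> z k)"
  shows "R u \<le> ereal (c + \<xi> \<bullet> u)"
proof (rule ereal_le_epsilon2)
  fix e :: real assume e: "e > 0"
  have "(\<lambda>k. \<xi> \<bullet> z k) \<longlonglongrightarrow> \<xi> \<bullet> u" by (intro tendsto_intros assms(2))
  then have "\<forall>\<^sub>F k in sequentially. \<xi> \<bullet> z k < \<xi> \<bullet> u + e" using e by (intro order_tendstoD(2)) auto
  then have "\<forall>\<^sub>F k in sequentially. z k \<in> {x. R x \<le> ereal (c + \<xi> \<bullet> u + e)}"
  proof eventually_elim
    case (elim k)
    have "R (z k) \<le> ereal (c + \<xi> \<bullet> z k)" by (rule assms(3))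
    also have "\<dots> \<le> ereal (c + \<xi> \<bullet> u + e)" using elim by simp
    finally show ?case by simp
  qed
  then have "u \<in> {x. R x \<le> ereal (c + \<xi> \<bullet> u + e)}"
    using assms(1) unfolding lsc_fun_def by (intro Lim_in_closed_set[OF _ _ _ assms(2)]) auto
  then show "R u \<le> ereal (c + \<xi> \<bullet> u) + ereal e" by simp
qed

lemma strongly_convex_minus_inner_attains_min:
  fixes R :: "'a::{real_inner, complete_space} \<Rightarrow> ereal"
  assumes P: "proper_fun R" and L: "lsc_fun R" and S: "strongly_convex R \<sigma>" and "\<sigma> > 0"
    and x0: "\<xi>0 \<in> subdiff R x0"
  shows "\<exists>u. \<forall>z. R u - ereal (\<xi> \<bullet> u) \<le> R z - ereal (\<xi> \<bullet> z)"
proof -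
  define f where "f u = real_of_ereal (R u) - \<xi> \<bullet> u" for u
  have R_eq: "R x = ereal (f x + \<xi> \<bullet> x)" if "x \<in> effdom R" for x
    unfolding f_def using proper_fun_effdom_finite[OF P that] by simp
  have bdd: "f x0 - (norm (\<xi> - \<xi>0))\<^sup>2 / (4 * \<sigma>) \<le> f x" if "x \<in> effdom R" for x
  proof -
    have "\<sigma> * (norm (x - x0))\<^sup>2 \<le> bregman_real R \<xi>0 x x0"
      using strongly_convex_bregman_real_lower[OF P S x0 that] .
    moreover have "(\<xi> - \<xi>0) \<bullet> (x - x0) - \<sigma> * (norm (x - x0))\<^sup>2 \<le> (norm (\<xi> - \<xi>0))\<^sup>2 / (4 * \<sigma>)"
      using inner_minus_scaled_sq_le \<open>\<sigma> > 0\<close> .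
    moreover have "f x - f x0 = bregman_real R \<xi>0 x x0 - (\<xi> - \<xi>0) \<bullet> (x - x0)"
      unfolding f_def bregman_real_def by (simp add: inner_diff_left inner_diff_right)
    ultimately show ?thesis by linarith
  qed
  have mid_le: "f (midpoint a c) + \<sigma> / 4 * (norm (a - c))\<^sup>2 \<le> (f a + f c) / 2"
    if "a \<in> effdom R" "c \<in> effdom R" for a c
    using strongly_convex_minus_inner_midpoint[OF P S that] unfolding f_def .
  have closed: "u \<in> effdom R \<and> f u \<le> c"
    if "\<forall>k. z k \<in> effdom R \<and> f (z k) \<le> c" "z \<longlonglongrightarrow> u" for z u c
  proof -
    have "R (z k) \<le> ereal (c + \<xi> \<bullet> z k)" for k
      using R_eq[of "z k"] that(1) by simp
    then have Ru: "R u \<le> ereal (c + \<xi> \<bullet> u)" by (rule lsc_fun_limit_le[OF L that(2)])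
    then have u: "u \<in> effdom R" by (auto simp: effdom_def)
    show ?thesis using Ru R_eq[OF u] u by simp
  qed
  have "\<exists>u\<in>effdom R. \<forall>x\<in>effdom R. f u \<le> f x"
    using subdiff_effdom[OF x0] \<open>\<sigma> > 0\<close>
    by (intro midpoint_convex_attains_min[OF _ _ bdd strongly_convex_midpoint(1)[OF P S] mid_le closed]) auto
  then obtain u where u: "u \<in> effdom R" "\<And>x. x \<in> effdom R \<Longrightarrow> f u \<le> f x" by blast
  have "R u - ereal (\<xi> \<bullet> u) \<le> R z - ereal (\<xi> \<bullet> z)" for z
    using u by (cases "z \<in> effdom R") (auto simp: R_eq notin_effdom_iff)
  then show ?thesis by blast
qed

lemma strongly_convex_subdiff_inj:
  assumes "proper_fun R" "strongly_convex R \<sigma>" "\<sigma> > 0" "\<xi> \<in> subdiff R a" "\<xi> \<in> subdiff R b"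
  shows "a = b"
proof -
  have "\<sigma> * (norm (b - a))\<^sup>2 + \<sigma> * (norm (a - b))\<^sup>2 \<le> bregman_real R \<xi> b a + bregman_real R \<xi> a b"
    using strongly_convex_bregman_real_lower[OF assms(1,2)] subdiff_effdom assms(4,5) by (meson add_mono)
  also have "\<dots> = 0" unfolding bregman_real_def by (simp add: inner_diff_right)
  finally have "\<sigma> * (norm (a - b))\<^sup>2 \<le> 0" by (simp add: norm_minus_commute)
  then show ?thesis using assms(3) by (simp add: mult_le_0_iff)
qed

lemma
  fixes R :: "'a::{real_inner, complete_space} \<Rightarrow> ereal"
  assumes "proper_fun R" "lsc_fun R" "strongly_convex R \<sigma>" "\<sigma> > 0" "\<xi>0 \<in> subdiff R x0"
  shows subdiff_grad_conj: "\<xi> \<in> subdiff R (grad_conj R \<xi>)"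
    and grad_conj_eqI: "\<xi> \<in> subdiff R x \<Longrightarrow> grad_conj R \<xi> = x"
proof -
  have "\<exists>!x. \<xi> \<in> subdiff R x"
    using strongly_convex_minus_inner_attains_min[OF assms] strongly_convex_subdiff_inj[OF assms(1,3,4)]
    unfolding subdiff_iff_minimizer[OF assms(1)] by blast
  then show "\<xi> \<in> subdiff R (grad_conj R \<xi>)"
    unfolding grad_conj_def subdiff_iff_minimizer[OF assms(1), symmetric] by (rule theI')
  then show "\<xi> \<in> subdiff R x \<Longrightarrow> grad_conj R \<xi> = x"
    using strongly_convex_subdiff_inj[OF assms(1,3,4)] by blast
qed

section \<open>Descent estimates\<close>

lemma bregman_real_three_point:
  "bregman_real R \<xi>' z x' = bregman_real R \<xi> z x + bregman_real R \<xi>' x x' + (\<xi>' - \<xi>) \<bullet> (x - z)"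
  unfolding bregman_real_def by (simp add: inner_diff_left inner_diff_right algebra_simps)

lemma bregman_real_dual_bound:
  assumes "proper_fun R" "strongly_convex R \<sigma>" "\<sigma> > 0" "\<xi> \<in> subdiff R x" "x' \<in> effdom R"
  shows "bregman_real R \<xi>' x x' \<le> (norm (\<xi>' - \<xi>))\<^sup>2 / (4 * \<sigma>)"
proof -
  have "bregman_real R \<xi>' x x' = (\<xi>' - \<xi>) \<bullet> (x' - x) - bregman_real R \<xi> x' x"
    unfolding bregman_real_def by (simp add: inner_diff_left inner_diff_right algebra_simps)
  also have "\<dots> \<le> (\<xi>' - \<xi>) \<bullet> (x' - x) - \<sigma> * (norm (x' - x))\<^sup>2"
    using strongly_convex_bregman_real_lower[OF assms(1,2,4,5)] by simp
  also have "\<dots> \<le> (norm (\<xi>' - \<xi>))\<^sup>2 / (4 * \<sigma>)"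
    by (rule inner_minus_scaled_sq_le[OF assms(3)])
  finally show ?thesis .
qed

lemma bregman_real_le_imp_dist_le:
  assumes "proper_fun R" "strongly_convex R \<sigma>" "\<sigma> > 0" "\<xi> \<in> subdiff R x" "z \<in> effdom R"
    and "0 \<le> \<rho>" "bregman_real R \<xi> z x \<le> \<sigma> * \<rho>\<^sup>2"
  shows "dist x z \<le> \<rho>"
proof -
  have "\<sigma> * (norm (z - x))\<^sup>2 \<le> \<sigma> * \<rho>\<^sup>2"
    using strongly_convex_bregman_real_lower[OF assms(1,2,4,5)] assms(7) by linarith
  then have "(norm (z - x))\<^sup>2 \<le> \<rho>\<^sup>2" using assms(3) by simp
  then have "norm (z - x) \<le> \<rho>" using assms(6) by (rule power2_le_imp_le)
  then show ?thesis by (simp add: dist_norm norm_minus_commute)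
qed

lemma tangential_cone_inner_bound:
  fixes T :: "'a::{real_inner, complete_space} \<Rightarrow>\<^sub>L 'b::real_inner"
  assumes "norm (b - a - blinfun_apply T (p - x)) \<le> \<eta> * norm (b - a)"
  shows "(1 - \<eta>) * (norm (a - b))\<^sup>2 \<le> adjoint (blinfun_apply T) (a - b) \<bullet> (x - p)"
proof -
  define e where "e = b - a - blinfun_apply T (p - x)"
  have "blinfun_apply T (x - p) = (a - b) + e"
    unfolding e_def by (simp add: blinfun.diff_right)
  then have "adjoint (blinfun_apply T) (a - b) \<bullet> (x - p) = (norm (a - b))\<^sup>2 + e \<bullet> (a - b)"
    by (simp add: inner_commute adjoint_blinfun_inner[symmetric] inner_add_right power2_norm_eq_inner)
  moreover have "- (\<eta> * (norm (a - b))\<^sup>2) \<le> e \<bullet> (a - b)"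
  proof -
    have "norm (b - a) = norm (a - b)" by (rule norm_minus_commute)
    then have "norm e * norm (a - b) \<le> \<eta> * norm (a - b) * norm (a - b)"
      using mult_right_mono[OF assms norm_ge_zero[of "a - b"]] unfolding e_def by simp
    then show ?thesis using norm_cauchy_schwarz[of "- e" "a - b"] by (simp add: power2_eq_square)
  qed
  ultimately show ?thesis by (simp add: algebra_simps)
qed

lemma summable_of_descent:
  fixes \<Delta> a :: "nat \<Rightarrow> real"
  assumes descent: "\<And>n. \<Delta> (Suc n) \<le> \<Delta> n - c * a n"
    and "\<And>n. 0 \<le> \<Delta> n" "\<And>n. 0 \<le> a n" "c > 0"
  shows "summable a"
proof (rule summableI_nonneg_bounded)
  have telescope: "\<Delta> n + c * (\<Sum>k<n. a k) \<le> \<Delta> 0" for n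
  proof (induction n)
    case (Suc n)
    then show ?case using descent[of n] by (simp add: algebra_simps)
  qed simp
  have "c * (\<Sum>k<n. a k) \<le> \<Delta> 0" for n
    using telescope[of n] assms(2)[of n] by linarith
  then show "(\<Sum>k<n. a k) \<le> \<Delta> 0 / c" for n
    using \<open>c > 0\<close> by (simp add: pos_le_divide_eq mult.commute)
qed (fact assms(3))

section \<open>The iteration with exact data\<close>

locale exact_data_iteration =
  fixes R :: "'x::{real_inner, complete_space} \<Rightarrow> ereal"
    and F :: "'x \<Rightarrow> 'y::real_inner" and y :: 'y
    and B :: "'x set" and Lop :: "'x \<Rightarrow> ('x \<Rightarrow>\<^sub>L 'y)"
    and \<sigma> \<eta> Lc \<mu>0 \<mu>1 :: real and \<beta> :: ereal and x0 \<xi>0 :: 'x and adaptive :: bool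
    and \<xi> xs g m :: "nat \<Rightarrow> 'x" and r :: "nat \<Rightarrow> 'y" and \<alpha> \<beta>s \<gamma> :: "nat \<Rightarrow> real"
  assumes R_proper: "proper_fun R"
    and R_lsc: "lsc_fun R"
    and \<sigma>_pos: "\<sigma> > 0"
    and R_sconv: "strongly_convex R \<sigma>"
    and \<xi>0_sub: "\<xi>0 \<in> subdiff R x0"
    and tcc: "\<And>u ub. u \<in> B \<Longrightarrow> ub \<in> B \<Longrightarrow>
                norm (F u - F ub - blinfun_apply (Lop ub) (u - ub)) \<le> \<eta> * norm (F u - F ub)"
    and Lc_pos: "Lc > 0"
    and L_bound: "\<And>u. u \<in> B \<Longrightarrow> norm (Lop u) \<le> Lc"
    and \<beta>_pos: "\<beta> > 0"
    and \<mu>0_pos: "\<mu>0 > 0" and \<mu>1_pos: "\<mu>1 > 0"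
    and \<mu>0_small: "\<mu>0 < 4 * \<sigma> * (1 - \<eta>)"
    and xi_0: "\<xi> 0 = \<xi>0"
    and xs_def: "\<And>n. xs n = grad_conj R (\<xi> n)"
    and r_def: "\<And>n. r n = F (xs n) - y"
    and g_def: "\<And>n. g n = adjoint (blinfun_apply (Lop (xs n))) (r n)"
    and alpha_def: "\<And>n. \<alpha> n =
         (if \<not> adaptive then \<mu>0 / Lc\<^sup>2
          else if r n = 0 then 0
          else if g n = 0 then \<mu>1
          else min (\<mu>0 * (norm (r n))\<^sup>2 / (norm (g n))\<^sup>2) \<mu>1)"
    and m_0: "m 0 = 0"
    and m_Suc: "\<And>n. m (Suc n) = \<xi> (Suc n) - \<xi> n"
    and gamma_0: "\<gamma> 0 = 0"
    and gamma_Suc: "\<And>n. \<gamma> (Suc n) = m (Suc n) \<bullet> (xs (Suc n) - xs n)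
                         - (1 - \<eta>) * \<alpha> n * (norm (r n))\<^sup>2 + \<beta>s n * \<gamma> n"
    and beta_def: "\<And>n. ereal (\<beta>s n) =
         (if m n = 0 then 0
          else min (ereal (max 0 ((\<alpha> n * (g n \<bullet> m n) - 2 * \<sigma> * \<gamma> n) / (norm (m n))\<^sup>2))) \<beta>)"
    and xi_Suc: "\<And>n. \<xi> (Suc n) = \<xi> n - \<alpha> n *\<^sub>R g n + \<beta>s n *\<^sub>R m n"
begin

lemma subdiff_iterate: "\<xi> n \<in> subdiff R (xs n)"
  unfolding xs_def by (rule subdiff_grad_conj[OF R_proper R_lsc R_sconv \<sigma>_pos \<xi>0_sub])

lemma iterate_0: "xs 0 = x0"
  unfolding xs_def xi_0 by (rule grad_conj_eqI[OF R_proper R_lsc R_sconv \<sigma>_pos \<xi>0_sub \<xi>0_sub])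

lemma iterate_effdom: "xs n \<in> effdom R"
  using subdiff_effdom[OF subdiff_iterate] .

lemma descent_constant_pos: "1 - \<eta> - \<mu>0 / (4 * \<sigma>) > 0"
  using \<mu>0_small \<sigma>_pos by (simp add: field_simps)

lemma step_size_nonneg: "0 \<le> \<alpha> n"
  unfolding alpha_def using \<mu>0_pos \<mu>1_pos by auto

lemma step_size_bound:
  assumes "xs n \<in> B"
  shows "\<alpha> n * (norm (g n))\<^sup>2 \<le> \<mu>0 * (norm (r n))\<^sup>2"
proof (cases adaptive)
  case False
  have "norm (g n) \<le> Lc * norm (r n)"
    using norm_adjoint_blinfun_le[of "Lop (xs n)" "r n"] L_bound[OF assms] unfolding g_def
    by (meson mult_right_mono norm_ge_zero order_trans)
  then have "(norm (g n))\<^sup>2 \<le> Lc\<^sup>2 * (norm (r n))\<^sup>2"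
    by (metis norm_ge_zero power_mono power_mult_distrib)
  then show ?thesis
    using False Lc_pos \<mu>0_pos unfolding alpha_def by (simp add: field_simps)
next
  case True
  show ?thesis
  proof (cases "r n = 0 \<or> g n = 0")
    case False
    then have "\<alpha> n \<le> \<mu>0 * (norm (r n))\<^sup>2 / (norm (g n))\<^sup>2"
      using \<open>adaptive\<close> unfolding alpha_def by auto
    then show ?thesis using False by (simp add: pos_le_divide_eq)
  qed (use True \<mu>0_pos in \<open>auto simp: alpha_def\<close>)
qed

lemma momentum_nonneg: "0 \<le> \<beta>s n"
proof -
  have "ereal 0 \<le> ereal (\<beta>s n)"
    unfolding beta_def using \<beta>_pos by (auto simp: zero_ereal_def)
  then show ?thesis by simp
qed

lemma momentum_bound:
  "\<beta>s n * (\<beta>s n * (norm (m n))\<^sup>2 - 2 * \<alpha> n * (g n \<bullet> m n) + 4 * \<sigma> * \<gamma> n) \<le> 0"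
proof (cases "\<beta>s n = 0")
  case False
  define q where "q = (\<alpha> n * (g n \<bullet> m n) - 2 * \<sigma> * \<gamma> n) / (norm (m n))\<^sup>2"
  have "m n \<noteq> 0" using False beta_def[of n] by (auto simp: zero_ereal_def)
  then have "ereal (\<beta>s n) \<le> ereal (max 0 q)" using beta_def[of n] unfolding q_def by simp
  then have "\<beta>s n \<le> max 0 q" by (metis ereal_less_eq(3))
  then have "\<beta>s n \<le> q" using False momentum_nonneg[of n] by linarith
  then have "\<beta>s n * (norm (m n))\<^sup>2 \<le> \<alpha> n * (g n \<bullet> m n) - 2 * \<sigma> * \<gamma> n"
    using \<open>m n \<noteq> 0\<close> unfolding q_def by (simp add: pos_le_divide_eq)
  then have "\<beta>s n * (norm (m n))\<^sup>2 - 2 * \<alpha> n * (g n \<bullet> m n) + 4 * \<sigma> * \<gamma> n \<le> - (\<beta>s n * (norm (m n))\<^sup>2)"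
    by linarith
  also have "\<dots> \<le> 0" using momentum_nonneg[of n] by simp
  finally show ?thesis using momentum_nonneg[of n] by (rule mult_nonneg_nonpos[rotated])
qed simp

lemma dual_increment_bound:
  assumes "xs n \<in> B"
  shows "(norm (\<xi> (Suc n) - \<xi> n))\<^sup>2 + 4 * \<sigma> * (\<beta>s n * \<gamma> n) \<le> \<mu>0 * \<alpha> n * (norm (r n))\<^sup>2"
proof -
  have "(norm (\<xi> (Suc n) - \<xi> n))\<^sup>2 + 4 * \<sigma> * (\<beta>s n * \<gamma> n)
      = \<alpha> n * (\<alpha> n * (norm (g n))\<^sup>2)
        + \<beta>s n * (\<beta>s n * (norm (m n))\<^sup>2 - 2 * \<alpha> n * (g n \<bullet> m n) + 4 * \<sigma> * \<gamma> n)"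
    unfolding xi_Suc power2_norm_eq_inner
    by (simp add: inner_add_left inner_add_right inner_diff_left inner_diff_right inner_commute algebra_simps)
  also have "\<dots> \<le> \<alpha> n * (\<mu>0 * (norm (r n))\<^sup>2) + 0"
    using step_size_bound[OF assms] step_size_nonneg[of n] momentum_bound[of n]
    by (intro add_mono mult_left_mono)
  finally show ?thesis by (simp add: algebra_simps)
qed

lemma residual_inner_bound:
  assumes "p \<in> B" "F p = y" "xs n \<in> B"
  shows "(1 - \<eta>) * (norm (r n))\<^sup>2 \<le> g n \<bullet> (xs n - p)"
  using tangential_cone_inner_bound[OF tcc[OF assms(1,3)]] unfolding g_def r_def assms(2) .

lemma increment_inner_bound:
  assumes "p \<in> B" "F p = y" "xs n \<in> B" "m n \<bullet> (xs n - p) \<le> \<gamma> n"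
  shows "(\<xi> (Suc n) - \<xi> n) \<bullet> (xs n - p) \<le> \<beta>s n * \<gamma> n - (1 - \<eta>) * \<alpha> n * (norm (r n))\<^sup>2"
proof -
  have "\<alpha> n * ((1 - \<eta>) * (norm (r n))\<^sup>2) \<le> \<alpha> n * (g n \<bullet> (xs n - p))"
    using residual_inner_bound[OF assms(1-3)] step_size_nonneg by (rule mult_left_mono)
  moreover have "\<beta>s n * (m n \<bullet> (xs n - p)) \<le> \<beta>s n * \<gamma> n"
    using assms(4) momentum_nonneg by (rule mult_left_mono)
  ultimately show ?thesis unfolding xi_Suc by (simp add: inner_diff_left inner_add_left algebra_simps)
qed

lemma momentum_invariant_Suc:
  assumes "p \<in> B" "F p = y" "xs n \<in> B" "m n \<bullet> (xs n - p) \<le> \<gamma> n"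
  shows "m (Suc n) \<bullet> (xs (Suc n) - p) \<le> \<gamma> (Suc n)"
proof -
  have "m (Suc n) \<bullet> (xs (Suc n) - p)
      = m (Suc n) \<bullet> (xs (Suc n) - xs n) + (\<xi> (Suc n) - \<xi> n) \<bullet> (xs n - p)"
    unfolding m_Suc by (simp add: inner_diff_right)
  then show ?thesis using increment_inner_bound[OF assms] unfolding gamma_Suc by linarith
qed

lemma bregman_descent:
  assumes "p \<in> effdom R" "p \<in> B" "F p = y" "xs n \<in> B" "m n \<bullet> (xs n - p) \<le> \<gamma> n"
  shows "bregman_real R (\<xi> (Suc n)) p (xs (Suc n))
           \<le> bregman_real R (\<xi> n) p (xs n) - (1 - \<eta> - \<mu>0 / (4 * \<sigma>)) * \<alpha> n * (norm (r n))\<^sup>2"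
proof -
  let ?d = "\<xi> (Suc n) - \<xi> n"
  have "bregman_real R (\<xi> (Suc n)) (xs n) (xs (Suc n)) + \<beta>s n * \<gamma> n \<le> \<mu>0 / (4 * \<sigma>) * \<alpha> n * (norm (r n))\<^sup>2"
  proof -
    have "bregman_real R (\<xi> (Suc n)) (xs n) (xs (Suc n)) \<le> (norm ?d)\<^sup>2 / (4 * \<sigma>)"
      using bregman_real_dual_bound[OF R_proper R_sconv \<sigma>_pos subdiff_iterate iterate_effdom] .
    moreover have "((norm ?d)\<^sup>2 + 4 * \<sigma> * (\<beta>s n * \<gamma> n)) / (4 * \<sigma>)
        \<le> \<mu>0 * \<alpha> n * (norm (r n))\<^sup>2 / (4 * \<sigma>)"
      using dual_increment_bound[OF assms(4)] by (rule divide_right_mono) (use \<sigma>_pos in simp)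
    moreover have "((norm ?d)\<^sup>2 + 4 * \<sigma> * (\<beta>s n * \<gamma> n)) / (4 * \<sigma>) = (norm ?d)\<^sup>2 / (4 * \<sigma>) + \<beta>s n * \<gamma> n"
      using \<sigma>_pos by (simp add: add_divide_distrib)
    ultimately show ?thesis by simp
  qed
  then show ?thesis
    using bregman_real_three_point[of R "\<xi> (Suc n)" p "xs (Suc n)" "\<xi> n" "xs n"]
      increment_inner_bound[OF assms(2-5)]
    by (simp add: algebra_simps)
qed

lemma momentum_invariant:
  assumes "\<And>n. xs n \<in> B" "p \<in> B" "F p = y"
  shows "m n \<bullet> (xs n - p) \<le> \<gamma> n"
proof (induction n)
  case (Suc n)
  then show ?case by (rule momentum_invariant_Suc[OF assms(2,3,1)])
qed (simp add: m_0 gamma_0)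

lemma descent_decrement_nonneg: "0 \<le> (1 - \<eta> - \<mu>0 / (4 * \<sigma>)) * \<alpha> n * (norm (r n))\<^sup>2"
  using descent_constant_pos step_size_nonneg[of n] by simp

lemma iterates_in_cball:
  assumes "xb \<in> effdom R" "F xb = y" "0 \<le> \<rho>" "cball xb \<rho> \<subseteq> B"
    and "bregman_real R \<xi>0 xb x0 \<le> \<sigma> * \<rho>\<^sup>2"
  shows "xs n \<in> cball xb \<rho>"
proof -
  have xb: "xb \<in> B" using assms(3,4) by auto
  note dist_le = bregman_real_le_imp_dist_le[OF R_proper R_sconv \<sigma>_pos subdiff_iterate assms(1,3)]
  have "xs n \<in> cball xb \<rho> \<and> m n \<bullet> (xs n - xb) \<le> \<gamma> n \<and> bregman_real R (\<xi> n) xb (xs n) \<le> \<sigma> * \<rho>\<^sup>2"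
  proof (induction n)
    case 0
    have "bregman_real R (\<xi> 0) xb (xs 0) \<le> \<sigma> * \<rho>\<^sup>2" using assms(5) by (simp add: xi_0 iterate_0)
    then show ?case using dist_le by (simp add: m_0 gamma_0 dist_commute)
  next
    case (Suc n)
    then have xs_B: "xs n \<in> B" using assms(4) by blast
    have "bregman_real R (\<xi> (Suc n)) xb (xs (Suc n)) \<le> \<sigma> * \<rho>\<^sup>2"
      using bregman_descent[OF assms(1) xb assms(2) xs_B] descent_decrement_nonneg[of n] Suc by linarith
    then show ?case using dist_le momentum_invariant_Suc[OF xb assms(2) xs_B] Suc by (simp add: dist_commute)
  qed
  then show ?thesis by blast
qed

lemma iterates_in_double_cball:
  assumes "F xb = y" "bregman R \<xi>0 xb x0 \<le> ereal (\<sigma> * \<rho>\<^sup>2)" "0 \<le> \<rho>" "cball x0 (2 * \<rho>) \<subseteq> B"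
  shows "xs n \<in> cball x0 (2 * \<rho>)"
proof -
  have x0: "x0 \<in> effdom R" using subdiff_effdom[OF \<xi>0_sub] .
  have xb: "xb \<in> effdom R"
  proof (rule ccontr)
    assume "xb \<notin> effdom R"
    then have "bregman R \<xi>0 xb x0 = \<infinity>"
      unfolding bregman_def notin_effdom_iff by (subst proper_fun_effdom_finite[OF R_proper x0]) simp
    then show False using assms(2) by simp
  qed
  have breg: "bregman_real R \<xi>0 xb x0 \<le> \<sigma> * \<rho>\<^sup>2"
    using assms(2) bregman_eq_bregman_real[OF R_proper xb x0] by simp
  then have "dist x0 xb \<le> \<rho>"
    using bregman_real_le_imp_dist_le[OF R_proper R_sconv \<sigma>_pos \<xi>0_sub xb assms(3)] by simp
  then have "cball xb \<rho> \<subseteq> cball x0 (2 * \<rho>)"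
  proof (intro subsetI)
    fix z assume "z \<in> cball xb \<rho>"
    then show "z \<in> cball x0 (2 * \<rho>)"
      using \<open>dist x0 xb \<le> \<rho>\<close> dist_triangle[of x0 z xb] by (simp add: mem_cball)
  qed
  then show ?thesis
    using iterates_in_cball[OF xb assms(1,3) _ breg] assms(4) by blast
qed

lemma bregman_iterate_eq: "p \<in> effdom R \<Longrightarrow> bregman R (\<xi> n) p (xs n) = ereal (bregman_real R (\<xi> n) p (xs n))"
  by (rule bregman_eq_bregman_real[OF R_proper _ iterate_effdom])

context
  fixes p
  assumes iterates_B: "\<And>n. xs n \<in> B" and solution: "p \<in> B \<inter> effdom R" "F p = y"
begin

lemma solution_descent:
  "bregman_real R (\<xi> (Suc n)) p (xs (Suc n))
     \<le> bregman_real R (\<xi> n) p (xs n) - (1 - \<eta> - \<mu>0 / (4 * \<sigma>)) * (\<alpha> n * (norm (r n))\<^sup>2)"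
  using bregman_descent[OF _ _ solution(2) iterates_B momentum_invariant[OF iterates_B _ solution(2)]]
    solution(1) by (simp add: mult.assoc)

lemma solution_bregman_descent:
  "bregman R (\<xi> (Suc n)) p (xs (Suc n))
     \<le> bregman R (\<xi> n) p (xs n) - ereal ((1 - \<eta> - \<mu>0 / (4 * \<sigma>)) * \<alpha> n * (norm (r n))\<^sup>2)"
  using solution_descent solution(1) by (simp add: bregman_iterate_eq mult.assoc)

lemma solution_bregman_decseq: "decseq (\<lambda>n. bregman R (\<xi> n) p (xs n))"
proof -
  have "bregman_real R (\<xi> (Suc n)) p (xs (Suc n)) \<le> bregman_real R (\<xi> n) p (xs n)" for n
    using solution_descent[of n] descent_decrement_nonneg[of n] by (simp add: mult.assoc)
  then show ?thesis unfolding decseq_Suc_iff using solution(1) by (simp add: bregman_iterate_eq)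
qed

lemma summable_residuals: "summable (\<lambda>n. \<alpha> n * (norm (r n))\<^sup>2)"
proof (rule summable_of_descent[where \<Delta> = "\<lambda>n. bregman_real R (\<xi> n) p (xs n)"])
  show "bregman_real R (\<xi> (Suc n)) p (xs (Suc n))
      \<le> bregman_real R (\<xi> n) p (xs n) - (1 - \<eta> - \<mu>0 / (4 * \<sigma>)) * (\<alpha> n * (norm (r n))\<^sup>2)" for n
    by (rule solution_descent)
  show "0 \<le> bregman_real R (\<xi> n) p (xs n)" for n
    using bregman_real_subdiff_nonneg[OF R_proper subdiff_iterate] solution(1) by blast
qed (use step_size_nonneg descent_constant_pos in simp_all)

end

end

theorem mainTheorem5:
  fixes R :: "'x::{real_inner, complete_space} \<Rightarrow> ereal"
    and F :: "'x \<Rightarrow> 'y::{real_inner, complete_space}"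
    and domF :: "'x set"
    and y :: 'y
    and \<sigma> \<rho> \<eta> Lc \<mu>0 \<mu>1 :: real
    and \<beta> :: ereal
    and x0 \<xi>0 :: 'x
    and Lop :: "'x \<Rightarrow> ('x \<Rightarrow>\<^sub>L 'y)"
    and adaptive :: bool
    and \<xi> xs g m :: "nat \<Rightarrow> 'x"
    and r :: "nat \<Rightarrow> 'y"
    and \<alpha> \<beta>s \<gamma> :: "nat \<Rightarrow> real"
  assumes R_proper: "proper_fun R"
    and R_lsc: "lsc_fun R"
    and \<sigma>_pos: "\<sigma> > 0"
    and R_sconv: "strongly_convex R \<sigma>"
    and \<rho>_pos: "\<rho> > 0"
    and \<xi>0_sub: "\<xi>0 \<in> subdiff R x0"
    and ball_dom: "cball x0 (2 * \<rho>) \<subseteq> domF"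
    and sol_exists: "\<exists>xb \<in> domF. F xb = y \<and> bregman R \<xi>0 xb x0 \<le> ereal (\<sigma> * \<rho>\<^sup>2)"
    and F_weakly_closed: "\<And>us u v. (\<forall>n. us n \<in> domF) \<Longrightarrow> weak_conv us u \<Longrightarrow>
                              (\<lambda>n. F (us n)) \<longlonglongrightarrow> v \<Longrightarrow> u \<in> domF \<and> F u = v"
    and L_cont: "continuous_on (cball x0 (2 * \<rho>)) Lop"
    and \<eta>_range: "0 \<le> \<eta>" "\<eta> < 1"
    and tcc: "\<And>u ub. u \<in> cball x0 (2 * \<rho>) \<Longrightarrow> ub \<in> cball x0 (2 * \<rho>) \<Longrightarrow>
                norm (F u - F ub - blinfun_apply (Lop ub) (u - ub)) \<le> \<eta> * norm (F u - F ub)"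
    and Lc_pos: "Lc > 0"
    and L_bound: "\<And>u. u \<in> cball x0 (2 * \<rho>) \<Longrightarrow> norm (Lop u) \<le> Lc"
    and \<beta>_pos: "\<beta> > 0"
    and \<mu>0_pos: "\<mu>0 > 0" and \<mu>1_pos: "\<mu>1 > 0"
    and \<mu>0_small: "\<mu>0 < 4 * \<sigma> * (1 - \<eta>)"
    and xi_0: "\<xi> 0 = \<xi>0"
    and xs_def: "\<And>n. xs n = grad_conj R (\<xi> n)"
    and r_def: "\<And>n. r n = F (xs n) - y"
    and g_def: "\<And>n. g n = adjoint (blinfun_apply (Lop (xs n))) (r n)"
    and alpha_def: "\<And>n. \<alpha> n =
         (if \<not> adaptive then \<mu>0 / Lc\<^sup>2
          else if r n = 0 then 0
          else if g n = 0 then \<mu>1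
          else min (\<mu>0 * (norm (r n))\<^sup>2 / (norm (g n))\<^sup>2) \<mu>1)"
    and m_0: "m 0 = 0"
    and m_Suc: "\<And>n. m (Suc n) = \<xi> (Suc n) - \<xi> n"
    and gamma_0: "\<gamma> 0 = 0"
    and gamma_Suc: "\<And>n. \<gamma> (Suc n) = m (Suc n) \<bullet> (xs (Suc n) - xs n)
                         - (1 - \<eta>) * \<alpha> n * (norm (r n))\<^sup>2 + \<beta>s n * \<gamma> n"
    and beta_def: "\<And>n. ereal (\<beta>s n) =
         (if m n = 0 then 0
          else min (ereal (max 0 ((\<alpha> n * (g n \<bullet> m n) - 2 * \<sigma> * \<gamma> n) / (norm (m n))\<^sup>2))) \<beta>)"
    and xi_Suc: "\<And>n. \<xi> (Suc n) = \<xi> n - \<alpha> n *\<^sub>R g n + \<beta>s n *\<^sub>R m n"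
  shows "(\<forall>n. xs n \<in> cball x0 (2 * \<rho>)) \<and>
         (\<forall>xh. xh \<in> cball x0 (2 * \<rho>) \<inter> effdom R \<longrightarrow> F xh = y \<longrightarrow>
            (let \<Delta> = (\<lambda>n. bregman R (\<xi> n) xh (xs n));
                 c1 = 1 - \<eta> - \<mu>0 / (4 * \<sigma>)
             in c1 > 0 \<and>
                (\<forall>n. \<Delta> (Suc n) \<le> \<Delta> n - ereal (c1 * \<alpha> n * (norm (F (xs n) - y))\<^sup>2)) \<and>
                decseq \<Delta> \<and>
                summable (\<lambda>n. \<alpha> n * (norm (F (xs n) - y))\<^sup>2)))"
proof -
  interpret exact_data_iteration R F y "cball x0 (2 * \<rho>)" Lop \<sigma> \<eta> Lc \<mu>0 \<mu>1 \<beta> x0 \<xi>0 adaptive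
      \<xi> xs g m r \<alpha> \<beta>s \<gamma>
    using assms by unfold_locales
  obtain xb where "F xb = y" "bregman R \<xi>0 xb x0 \<le> ereal (\<sigma> * \<rho>\<^sup>2)" using sol_exists by blast
  then have in_ball: "\<And>n. xs n \<in> cball x0 (2 * \<rho>)"
    using iterates_in_double_cball \<rho>_pos by simp
  show ?thesis
    unfolding Let_def r_def[symmetric]
    using in_ball descent_constant_pos solution_bregman_descent[OF in_ball]
      solution_bregman_decseq[OF in_ball] summable_residuals[OF in_ball]
    by blast
qed

end
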